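(* For every integer $k \ge 1$ and all $\alpha > 0$ and $\lambda > 0$, there exists $\tau > 0$ such that the following holds. Let $V_1,\dots,V_k$ be finite sets and let $d$ be an integer with $2 \le d \le \min\{|V_1|,\dots,|V_k|\}$. Suppose that $\mathcal{H} \subseteq V_1 \times \dots \times V_k$ satisfies $|\mathcal{H}| \le \tau \prod_{i=1}^k |V_i|$, and let $W_1,\dots,W_k$ be independent uniformly chosen random $d$-element subsets of $V_1,\dots,V_k$, respectively. Then \[ \Pr\left(|\mathcal{H} \cap (W_1 \times \dots \times W_k)| > \lambda d^k\right) \le \alpha^d. \] *)

theory Defs
  imports "HOL-Probability.Probability"
begin

end

(*
  Induction on k, proving the statement for weight functions f with values in [0, 1] on the box
  V_1 x ... x V_k instead of indicator functions of H; this generalisation is what makes the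
  induction go through.

  For k = 1 and weights s on V with small average, call a vertex heavy if s v >= lam / 2. There are
  few heavy vertices, and a d-set W of weight > lam d contains at least m >= lam d / 2 of them. By
  double counting, W meets a fixed set A in at least m points with probability at most
  C(d, m) (|A| / |V|)^m, which is at most alpha^d once |A| / |V| is small enough.

  For the induction step, condition on the last coordinate W_{k+1} = y. The weight of the box
  W_1 x ... x W_{k+1} is d times the weight of W_1 x ... x W_k under the fiber averages of f over y,
  and these fiber averages have small total weight unless the vertices of y lie in dense slices of f.
  The latter event is one-dimensional, and each of the two bad events has probability at most
  (alpha / 2)^d.
*)

theory Submission
  imports Defs
begin

definition uniform_subset :: "'a set \<Rightarrow> nat \<Rightarrow> 'a set pmf" where
  "uniform_subset V d = pmf_of_set {S. S \<subseteq> V \<and> card S = d}"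

lemma finite_subsets_with_card: "finite V \<Longrightarrow> finite {S. S \<subseteq> V \<and> card S = d}"
  by (auto intro: finite_subset[of _ "Pow V"])

lemma subsets_with_card_nonempty: "d \<le> card V \<Longrightarrow> {S. S \<subseteq> V \<and> card S = d} \<noteq> {}"
  using obtain_subset_with_card_n by blast

lemma set_pmf_uniform_subset:
  assumes "finite V" "d \<le> card V"
  shows "set_pmf (uniform_subset V d) = {S. S \<subseteq> V \<and> card S = d}"
  unfolding uniform_subset_def
  using subsets_with_card_nonempty[OF assms(2)] finite_subsets_with_card[OF assms(1)] by simp

lemma measure_uniform_subset:
  assumes "finite V" "d \<le> card V"
  shows "measure_pmf.prob (uniform_subset V d) E
         = real (card ({S. S \<subseteq> V \<and> card S = d} \<inter> E)) / real (card V choose d)"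
  unfolding uniform_subset_def
  using subsets_with_card_nonempty[OF assms(2)] finite_subsets_with_card[OF assms(1)] assms(1)
  by (simp add: measure_pmf_of_set n_subsets)

lemma card_supersets_with_card:
  assumes "finite V" "T \<subseteq> V" "card T \<le> d"
  shows "card {W. W \<subseteq> V \<and> card W = d \<and> T \<subseteq> W} = (card V - card T) choose (d - card T)"
proof -
  have "finite T" using assms finite_subset by blast
  have "bij_betw (\<lambda>W. W - T) {W. W \<subseteq> V \<and> card W = d \<and> T \<subseteq> W}
          {B. B \<subseteq> V - T \<and> card B = d - card T}"
  proof (rule bij_betw_byWitness[where f'="\<lambda>B. B \<union> T"])
    show "(\<lambda>B. B \<union> T) ` {B. B \<subseteq> V - T \<and> card B = d - card T} \<subseteq> {W. W \<subseteq> V \<and> card W = d \<and> T \<subseteq> W}"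
    proof safe
      fix B assume "B \<subseteq> V - T" "card B = d - card T"
      moreover from this have "finite B" using assms finite_subset by blast
      ultimately show "card (B \<union> T) = d"
        using assms \<open>finite T\<close> by (subst card_Un_disjoint) auto
    qed (use assms in auto)
  qed (use assms \<open>finite T\<close> in \<open>auto simp: card_Diff_subset\<close>)
  then have "card {W. W \<subseteq> V \<and> card W = d \<and> T \<subseteq> W} = card (V - T) choose (d - card T)"
    using assms by (simp add: bij_betw_same_card n_subsets)
  then show ?thesis
    using assms \<open>finite T\<close> by (simp add: card_Diff_subset)
qed

lemma sum_card_Int_choose:
  assumes "finite V" "A \<subseteq> V" "m \<le> d"
  shows "(\<Sum>W | W \<subseteq> V \<and> card W = d. card (A \<inter> W) choose m)
         = (card A choose m) * ((card V - m) choose (d - m))"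
proof -
  define \<T> where "\<T> = {T. T \<subseteq> A \<and> card T = m}"
  have "finite A" using assms finite_subset by blast
  then have "finite \<T>" unfolding \<T>_def by (rule finite_subsets_with_card)
  have "(\<Sum>W | W \<subseteq> V \<and> card W = d. card (A \<inter> W) choose m)
        = (\<Sum>W | W \<subseteq> V \<and> card W = d. \<Sum>T\<in>\<T>. of_bool (T \<subseteq> W))"
  proof (rule sum.cong[OF refl])
    fix W
    have "{T. T \<subseteq> A \<inter> W \<and> card T = m} = \<T> \<inter> {T. T \<subseteq> W}" unfolding \<T>_def by auto
    then show "card (A \<inter> W) choose m = (\<Sum>T\<in>\<T>. of_bool (T \<subseteq> W))"
      using n_subsets[of "A \<inter> W" m] \<open>finite A\<close> \<open>finite \<T>\<close> by simp
  qed
  also have "\<dots> = (\<Sum>T\<in>\<T>. \<Sum>W | W \<subseteq> V \<and> card W = d. of_bool (T \<subseteq> W))"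
    by (rule sum.swap)
  also have "\<dots> = (\<Sum>T\<in>\<T>. (card V - m) choose (d - m))"
  proof (rule sum.cong[OF refl])
    fix T assume "T \<in> \<T>"
    have "{W. W \<subseteq> V \<and> card W = d} \<inter> {W. T \<subseteq> W} = {W. W \<subseteq> V \<and> card W = d \<and> T \<subseteq> W}"
      by auto
    then show "(\<Sum>W | W \<subseteq> V \<and> card W = d. of_bool (T \<subseteq> W)) = (card V - m) choose (d - m)"
      using \<open>T \<in> \<T>\<close> assms card_supersets_with_card[OF assms(1), of T d]
        finite_subsets_with_card[OF assms(1)] by (auto simp: \<T>_def)
  qed
  also have "\<dots> = (card A choose m) * ((card V - m) choose (d - m))"
    using \<open>finite A\<close> by (simp add: \<T>_def n_subsets)
  finally show ?thesis .
qed

lemma binomial_mult_power_le: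
  assumes "a \<le> n"
  shows "real (a choose m) * real n ^ m \<le> real (n choose m) * real a ^ m"
proof (cases "m \<le> a")
  case False
  then have "a choose m = 0" by simp
  then show ?thesis by (simp del: binomial_eq_0_iff)
next
  case True
  have "fact m * (real (a choose m) * real n ^ m) = (\<Prod>i<m. (real a - real i) * real n)"
    by (simp add: binomial_gbinomial gbinomial_prod_rev prod.distrib atLeast0LessThan)
  also have "\<dots> \<le> (\<Prod>i<m. (real n - real i) * real a)"
  proof (rule prod_mono)
    fix i assume "i \<in> {..<m}"
    have "real a * real i \<le> real n * real i" using assms by (intro mult_right_mono) auto
    moreover have "real i * real n \<le> real a * real n"
      using \<open>i \<in> {..<m}\<close> True by (intro mult_right_mono) auto
    ultimately show "0 \<le> (real a - real i) * real n \<and> (real a - real i) * real n \<le> (real n - real i) * real a"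
      using \<open>i \<in> {..<m}\<close> True by (simp add: algebra_simps)
  qed
  also have "\<dots> = fact m * (real (n choose m) * real a ^ m)"
    by (simp add: binomial_gbinomial gbinomial_prod_rev prod.distrib atLeast0LessThan)
  finally show ?thesis by simp
qed

lemma binomial_ratio_le_power:
  assumes "a \<le> n" "m \<le> n"
  shows "real (a choose m) / real (n choose m) \<le> (real a / real n) ^ m"
proof (cases "n = 0")
  case False
  then show ?thesis
    using binomial_mult_power_le[OF assms(1), of m] assms(2)
    by (simp add: field_simps power_divide)
qed (use assms in simp)

lemma prob_uniform_subset_card_Int_ge:
  assumes "finite V" "A \<subseteq> V" "d \<le> card V"
  shows "measure_pmf.prob (uniform_subset V d) {W. m \<le> card (A \<inter> W)}
         \<le> real (d choose m) * (real (card A) / real (card V)) ^ m"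
proof (cases "m \<le> d")
  case False
  have "{S. S \<subseteq> V \<and> card S = d} \<inter> {W. m \<le> card (A \<inter> W)} = {}"
  proof (rule equals0I)
    fix W assume "W \<in> {S. S \<subseteq> V \<and> card S = d} \<inter> {W. m \<le> card (A \<inter> W)}"
    then have "W \<subseteq> V" "card W = d" "m \<le> card (A \<inter> W)" by auto
    moreover have "card (A \<inter> W) \<le> card W"
      using \<open>W \<subseteq> V\<close> assms(1) by (meson card_mono finite_subset inf_le2)
    ultimately show False using False by simp
  qed
  then show ?thesis using assms(1,3) by (simp add: measure_uniform_subset)
next
  case True
  define \<S> E where "\<S> = {W. W \<subseteq> V \<and> card W = d}" and "E = {W. m \<le> card (A \<inter> W)}"
  define n a where "n = card V" and "a = card A"
  have "finite \<S>" unfolding \<S>_def using assms(1) by (rule finite_subsets_with_card)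
  have "a \<le> n" "m \<le> n" unfolding a_def n_def using assms True card_mono by auto
  have "card (\<S> \<inter> E) = (\<Sum>W\<in>\<S> \<inter> E. 1)" by simp
  also have "\<dots> \<le> (\<Sum>W\<in>\<S> \<inter> E. card (A \<inter> W) choose m)"
    by (rule sum_mono) (simp add: E_def Suc_le_eq)
  also have "\<dots> \<le> (\<Sum>W\<in>\<S>. card (A \<inter> W) choose m)"
    by (rule sum_mono2) (use \<open>finite \<S>\<close> in auto)
  also have "\<dots> = (a choose m) * ((n - m) choose (d - m))"
    unfolding \<S>_def a_def n_def using assms(1,2) True by (rule sum_card_Int_choose)
  finally have count: "real (card (\<S> \<inter> E)) \<le> real (a choose m) * real ((n - m) choose (d - m))"
    by (simp flip: of_nat_mult)
  have "real (n choose d) * real (d choose m) = real (n choose m) * real ((n - m) choose (d - m))"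
    using True assms choose_mult[of m d n] unfolding n_def by (simp flip: of_nat_mult)
  moreover have "real (n choose d) > 0" "real (n choose m) > 0"
    using assms \<open>m \<le> n\<close> by (simp_all add: n_def)
  ultimately have "real (a choose m) * real ((n - m) choose (d - m)) / real (n choose d)
      = real (d choose m) * (real (a choose m) / real (n choose m))"
    by (simp add: field_simps)
  moreover have "measure_pmf.prob (uniform_subset V d) E = real (card (\<S> \<inter> E)) / real (n choose d)"
    unfolding \<S>_def n_def using assms(1,3) by (rule measure_uniform_subset)
  ultimately have "measure_pmf.prob (uniform_subset V d) E \<le> real (d choose m) * (real (a choose m) / real (n choose m))"
    using count \<open>real (n choose d) > 0\<close> by (metis divide_right_mono of_nat_0_le_iff order_less_le)
  also have "\<dots> \<le> real (d choose m) * (real a / real n) ^ m"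
    using \<open>a \<le> n\<close> \<open>m \<le> n\<close> by (intro mult_left_mono binomial_ratio_le_power) auto
  finally show ?thesis unfolding E_def a_def n_def .
qed

lemma card_Int_gt_of_sum_gt:
  fixes s :: "'a \<Rightarrow> real"
  assumes "finite W" "\<forall>v\<in>W. s v \<le> 1" "\<forall>v\<in>W - A. s v \<le> c" "0 \<le> c"
    and "(\<Sum>v\<in>W. s v) > b + c * real (card W)"
  shows "real (card (A \<inter> W)) > b"
proof -
  have "(\<Sum>v\<in>W. s v) = (\<Sum>v\<in>A \<inter> W. s v) + (\<Sum>v\<in>W - A. s v)"
    using assms(1) by (metis Int_commute sum.Int_Diff)
  also have "\<dots> \<le> real (card (A \<inter> W)) + c * real (card (W - A))"
    using sum_mono[of "A \<inter> W" s "\<lambda>_. 1"] sum_mono[of "W - A" s "\<lambda>_. c"] assms(2,3)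
    by (auto simp: mult.commute)
  also have "\<dots> \<le> real (card (A \<inter> W)) + c * real (card W)"
    using assms(1,4) by (auto intro!: mult_left_mono card_mono)
  finally show ?thesis using assms(5) by simp
qed

lemma card_ge_mult_le_sum:
  fixes s :: "'a \<Rightarrow> real"
  assumes "finite V" "\<forall>v\<in>V. 0 \<le> s v"
  shows "real (card {v\<in>V. c \<le> s v}) * c \<le> (\<Sum>v\<in>V. s v)"
proof -
  have "real (card {v\<in>V. c \<le> s v}) * c \<le> (\<Sum>v | v \<in> V \<and> c \<le> s v. s v)"
    using sum_mono[of "{v\<in>V. c \<le> s v}" "\<lambda>_. c" s] by (simp add: mult.commute)
  also have "\<dots> \<le> (\<Sum>v\<in>V. s v)"
    using assms by (intro sum_mono2) auto
  finally show ?thesis .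
qed

lemma binomial_mult_power_power_le:
  fixes \<beta> :: real
  assumes "0 \<le> \<beta>" "\<beta> \<le> 1" "d \<le> r * m"
  shows "real (d choose m) * (\<beta> ^ r) ^ m \<le> (2 * \<beta>) ^ d"
proof -
  have "(\<beta> ^ r) ^ m \<le> \<beta> ^ d"
    unfolding power_mult[symmetric] using assms by (intro power_decreasing) auto
  moreover have "real (d choose m) \<le> 2 ^ d"
    using binomial_le_pow2[of d m] by (simp flip: of_nat_le_iff)
  ultimately show ?thesis
    using assms(1) by (simp add: power_mult_distrib mult_mono)
qed

lemma le_mult_nat_ceiling:
  fixes lam :: real
  assumes "lam > 0"
  shows "d \<le> nat \<lceil>2 / lam\<rceil> * nat \<lceil>lam * real d / 2\<rceil>"
proof -
  define r m where "r = nat \<lceil>2 / lam\<rceil>" and "m = nat \<lceil>lam * real d / 2\<rceil>"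
  have "2 / lam \<le> real r" "lam * real d / 2 \<le> real m"
    unfolding r_def m_def by linarith+
  then have "(2 / lam) * (lam * real d / 2) \<le> real r * real m"
    using assms by (intro mult_mono) auto
  then show ?thesis
    using assms unfolding r_def[symmetric] m_def[symmetric] by (simp flip: of_nat_mult)
qed

(* With beta = min (alpha / 2) (1 / 2) and r = ceil (2 / lam), at most a beta^r fraction of the
   vertices has weight >= lam / 2, and for m >= lam d / 2 we get C(d, m) (beta^r)^m <= (2 beta)^d. *)
definition weight_threshold :: "real \<Rightarrow> real \<Rightarrow> real" where
  "weight_threshold \<alpha> lam = min (\<alpha> / 2) (1 / 2) ^ nat \<lceil>2 / lam\<rceil> * lam / 2"

lemma weight_threshold_pos: "\<alpha> > 0 \<Longrightarrow> lam > 0 \<Longrightarrow> weight_threshold \<alpha> lam > 0"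
  by (simp add: weight_threshold_def)

lemma prob_uniform_subset_sum_gt:
  fixes s :: "'a \<Rightarrow> real"
  assumes "\<alpha> > 0" "lam > 0" "finite V" "d \<le> card V"
    and "\<forall>v\<in>V. 0 \<le> s v \<and> s v \<le> 1"
    and "(\<Sum>v\<in>V. s v) \<le> weight_threshold \<alpha> lam * real (card V)"
  shows "measure_pmf.prob (uniform_subset V d) {W. (\<Sum>v\<in>W. s v) > lam * real d} \<le> \<alpha> ^ d"
proof -
  define \<beta> r where "\<beta> = min (\<alpha> / 2) (1 / 2)" and "r = nat \<lceil>2 / lam\<rceil>"
  define A m where "A = {v\<in>V. lam / 2 \<le> s v}" and "m = nat \<lceil>lam * real d / 2\<rceil>"
  have "real (card A) * (lam / 2) \<le> \<beta> ^ r * real (card V) * (lam / 2)"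
    using card_ge_mult_le_sum[OF assms(3), of s "lam / 2"] assms(5,6)
    by (simp add: A_def \<beta>_def r_def weight_threshold_def algebra_simps)
  then have "real (card A) / real (card V) \<le> \<beta> ^ r"
    using assms(1,2) by (cases "card V = 0") (simp_all add: divide_le_eq \<beta>_def)
  have "{W. (\<Sum>v\<in>W. s v) > lam * real d} \<inter> set_pmf (uniform_subset V d) \<subseteq> {W. m \<le> card (A \<inter> W)}"
  proof safe
    fix W assume "(\<Sum>v\<in>W. s v) > lam * real d" "W \<in> set_pmf (uniform_subset V d)"
    then have W: "W \<subseteq> V" "card W = d" using assms(3,4) by (simp_all add: set_pmf_uniform_subset)
    have "(\<Sum>v\<in>W. s v) > lam * real d / 2 + lam / 2 * real (card W)"
      using W(2) \<open>(\<Sum>v\<in>W. s v) > lam * real d\<close> by simp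
    then have "real (card (A \<inter> W)) > lam * real d / 2"
      using W(1) assms(2,3,5) by (intro card_Int_gt_of_sum_gt[where c = "lam / 2"]) (auto simp: A_def intro: finite_subset)
    then show "m \<le> card (A \<inter> W)" unfolding m_def by linarith
  qed
  then have "measure_pmf.prob (uniform_subset V d) {W. (\<Sum>v\<in>W. s v) > lam * real d}
      \<le> measure_pmf.prob (uniform_subset V d) {W. m \<le> card (A \<inter> W)}"
    by (intro measure_pmf.finite_measure_mono_AE) (auto simp: AE_measure_pmf_iff)
  also have "\<dots> \<le> real (d choose m) * (real (card A) / real (card V)) ^ m"
    using assms(3,4) by (intro prob_uniform_subset_card_Int_ge) (auto simp: A_def)
  also have "\<dots> \<le> real (d choose m) * (\<beta> ^ r) ^ m"
    using \<open>real (card A) / real (card V) \<le> \<beta> ^ r\<close> by (intro mult_left_mono power_mono) auto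
  also have "\<dots> \<le> (2 * \<beta>) ^ d"
    unfolding r_def m_def using assms(1,2)
    by (intro binomial_mult_power_power_le le_mult_nat_ceiling) (auto simp: \<beta>_def)
  also have "\<dots> \<le> \<alpha> ^ d" using assms(1) by (intro power_mono) (auto simp: \<beta>_def)
  finally show ?thesis .
qed

lemma prob_bind_pmf_le:
  assumes "\<And>y. y \<in> set_pmf p \<Longrightarrow> y \<notin> B \<Longrightarrow> measure_pmf.prob (g y) E \<le> c" "0 \<le> c"
  shows "measure_pmf.prob (bind_pmf p g) E \<le> measure_pmf.prob p B + c"
proof -
  have "emeasure (bind_pmf p g) E = (\<integral>\<^sup>+y. emeasure (g y) E \<partial>p)"
    by simp
  also have "\<dots> \<le> (\<integral>\<^sup>+y. indicator B y + ennreal c \<partial>p)"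
  proof (intro nn_integral_mono_AE AE_pmfI)
    fix y assume "y \<in> set_pmf p"
    show "emeasure (g y) E \<le> indicator B y + ennreal c"
    proof (cases "y \<in> B")
      case True
      then show ?thesis using measure_pmf.emeasure_le_1[of "g y" E] by (simp add: add_increasing2)
    next
      case False
      then show ?thesis
        using assms(1)[OF \<open>y \<in> set_pmf p\<close>] by (simp add: measure_pmf.emeasure_eq_measure ennreal_leI)
    qed
  qed
  also have "\<dots> = ennreal (measure_pmf.prob p B + c)"
    using assms(2) by (simp add: nn_integral_add measure_pmf.emeasure_eq_measure ennreal_plus)
  finally have "ennreal (measure_pmf.prob (bind_pmf p g) E) \<le> ennreal (measure_pmf.prob p B + c)"
    by (simp only: measure_pmf.emeasure_eq_measure)
  then show ?thesis
    using assms(2) by (subst (asm) ennreal_le_iff) auto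
qed

lemma prob_Pi_pmf_lessThan_Suc_le:
  assumes "\<And>y. y \<in> set_pmf (p k) \<Longrightarrow> y \<notin> B \<Longrightarrow>
             measure_pmf.prob (Pi_pmf {..<k} dflt p) {g. g(k := y) \<in> E} \<le> c"
    and "0 \<le> c"
  shows "measure_pmf.prob (Pi_pmf {..<Suc k} dflt p) E \<le> measure_pmf.prob (p k) B + c"
proof -
  have "Pi_pmf {..<Suc k} dflt p = bind_pmf (p k) (\<lambda>y. map_pmf (\<lambda>g. g(k := y)) (Pi_pmf {..<k} dflt p))"
    using Pi_pmf_insert'[of "{..<k}" k dflt p] by (simp add: lessThan_Suc map_pmf_def)
  then show ?thesis
    using assms by (simp add: prob_bind_pmf_le vimage_def)
qed

lemma sum_PiE_lessThan_Suc:
  "(\<Sum>e\<in>PiE {..<Suc k} V. f e) = (\<Sum>v\<in>V k. \<Sum>e\<in>PiE {..<k} V. f (e(k := v)))"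
proof -
  have "PiE {..<Suc k} V = (\<lambda>(v, e). e(k := v)) ` (V k \<times> PiE {..<k} V)"
    using PiE_insert_eq[of k "{..<k}" V] by (simp add: lessThan_Suc)
  moreover have "inj_on (\<lambda>(v, e). e(k := v)) (V k \<times> PiE {..<k} V)"
    by (rule inj_combinator) simp
  ultimately show ?thesis
    by (simp add: sum.reindex sum.cartesian_product case_prod_unfold)
qed

lemma fun_upd_in_PiE_lessThan_Suc:
  "e \<in> PiE {..<k} V \<Longrightarrow> v \<in> V k \<Longrightarrow> e(k := v) \<in> PiE {..<Suc k} V"
  by (auto simp: PiE_iff extensional_def)

definition slice_density :: "nat \<Rightarrow> (nat \<Rightarrow> 'a set) \<Rightarrow> ((nat \<Rightarrow> 'a) \<Rightarrow> real) \<Rightarrow> 'a \<Rightarrow> real" where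
  "slice_density k V f v = (\<Sum>e\<in>PiE {..<k} V. f (e(k := v))) / real (card (PiE {..<k} V))"

definition fiber_mean :: "nat \<Rightarrow> 'a set \<Rightarrow> ((nat \<Rightarrow> 'a) \<Rightarrow> real) \<Rightarrow> (nat \<Rightarrow> 'a) \<Rightarrow> real" where
  "fiber_mean k y f e = (\<Sum>v\<in>y. f (e(k := v))) / real (card y)"

lemma slice_density_bounds:
  assumes "\<forall>e\<in>PiE {..<Suc k} V. 0 \<le> f e \<and> f e \<le> 1" "v \<in> V k"
  shows "0 \<le> slice_density k V f v \<and> slice_density k V f v \<le> 1"
proof -
  have "0 \<le> f (e(k := v)) \<and> f (e(k := v)) \<le> 1" if "e \<in> PiE {..<k} V" for e
    using assms(1) fun_upd_in_PiE_lessThan_Suc[OF that assms(2)] by (rule bspec)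
  then have "0 \<le> (\<Sum>e\<in>PiE {..<k} V. f (e(k := v)))"
    "(\<Sum>e\<in>PiE {..<k} V. f (e(k := v))) \<le> real (card (PiE {..<k} V))"
    using sum_mono[of "PiE {..<k} V" "\<lambda>e. f (e(k := v))" "\<lambda>_. 1"] by (auto intro: sum_nonneg)
  then show ?thesis by (auto simp: slice_density_def divide_le_eq_1)
qed

lemma fiber_mean_bounds:
  assumes "\<forall>e\<in>PiE {..<Suc k} V. 0 \<le> f e \<and> f e \<le> 1" "e \<in> PiE {..<k} V" "y \<subseteq> V k"
  shows "0 \<le> fiber_mean k y f e \<and> fiber_mean k y f e \<le> 1"
proof -
  have "0 \<le> f (e(k := v)) \<and> f (e(k := v)) \<le> 1" if "v \<in> y" for v
    using assms(1) fun_upd_in_PiE_lessThan_Suc[OF assms(2) subsetD[OF assms(3) that]] by (rule bspec)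
  then have "0 \<le> (\<Sum>v\<in>y. f (e(k := v)))" "(\<Sum>v\<in>y. f (e(k := v))) \<le> real (card y)"
    using sum_mono[of y "\<lambda>v. f (e(k := v))" "\<lambda>_. 1"] by (auto intro: sum_nonneg)
  then show ?thesis by (auto simp: fiber_mean_def divide_le_eq_1)
qed

lemma sum_slice_density:
  "(\<Sum>v\<in>V k. slice_density k V f v) = (\<Sum>e\<in>PiE {..<Suc k} V. f e) / real (card (PiE {..<k} V))"
  by (simp add: slice_density_def sum_PiE_lessThan_Suc sum_divide_distrib)

lemma prob_uniform_subset_slice_density_gt:
  assumes "\<alpha> > 0" "\<tau> > 0" "finite (V k)" "d \<le> card (V k)"
    and "\<forall>e\<in>PiE {..<Suc k} V. 0 \<le> f e \<and> f e \<le> 1"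
    and "(\<Sum>e\<in>PiE {..<Suc k} V. f e) \<le> weight_threshold \<alpha> \<tau> * real (card (PiE {..<Suc k} V))"
  shows "measure_pmf.prob (uniform_subset (V k) d) {y. (\<Sum>v\<in>y. slice_density k V f v) > \<tau> * real d}
         \<le> \<alpha> ^ d"
proof (rule prob_uniform_subset_sum_gt)
  define N where "N = real (card (PiE {..<k} V))"
  have "real (card (PiE {..<Suc k} V)) = N * real (card (V k))"
    by (simp add: N_def card_PiE lessThan_Suc)
  moreover have "N \<ge> 0" by (simp add: N_def)
  ultimately show "(\<Sum>v\<in>V k. slice_density k V f v) \<le> weight_threshold \<alpha> \<tau> * real (card (V k))"
    using assms(6) weight_threshold_pos[OF assms(1,2)]
    by (cases "N = 0") (simp_all add: sum_slice_density divide_le_eq field_simps flip: N_def)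
qed (use assms slice_density_bounds[OF assms(5)] in auto)

lemma sum_fiber_mean:
  "(\<Sum>e\<in>PiE {..<k} V. fiber_mean k y f e)
   = real (card (PiE {..<k} V)) * (\<Sum>v\<in>y. slice_density k V f v) / real (card y)"
proof -
  have "(\<Sum>e\<in>PiE {..<k} V. f (e(k := v))) = real (card (PiE {..<k} V)) * slice_density k V f v" for v
    by (cases "card (PiE {..<k} V) = 0") (auto simp: slice_density_def card_eq_0_iff)
  then show ?thesis
    by (simp add: fiber_mean_def sum_divide_distrib[symmetric] sum.swap[of _ y] sum_distrib_left)
qed

lemma sum_PiE_lessThan_Suc_fun_upd:
  "(\<Sum>e\<in>PiE {..<Suc k} (W(k := y)). f e) = real (card y) * (\<Sum>e\<in>PiE {..<k} W. fiber_mean k y f e)"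
proof -
  have "PiE {..<k} (W(k := y)) = PiE {..<k} W" by (rule PiE_cong) auto
  then have "(\<Sum>e\<in>PiE {..<Suc k} (W(k := y)). f e) = (\<Sum>e\<in>PiE {..<k} W. \<Sum>v\<in>y. f (e(k := v)))"
    by (simp add: sum_PiE_lessThan_Suc sum.swap[of _ y])
  also have "\<dots> = (\<Sum>e\<in>PiE {..<k} W. real (card y) * fiber_mean k y f e)"
    by (rule sum.cong) (auto simp: fiber_mean_def card_eq_0_iff)
  also have "\<dots> = real (card y) * (\<Sum>e\<in>PiE {..<k} W. fiber_mean k y f e)"
    by (simp add: sum_distrib_left)
  finally show ?thesis .
qed

lemma two_mult_half_power_le:
  fixes \<alpha> :: real
  assumes "0 \<le> \<alpha>" "0 < d"
  shows "2 * (\<alpha> / 2) ^ d \<le> \<alpha> ^ d"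
proof -
  have "(2::real) ^ 1 \<le> 2 ^ d" using assms(2) by (intro power_increasing) auto
  then have "\<alpha> ^ d * (2 / 2 ^ d) \<le> \<alpha> ^ d" using assms(1) by (intro mult_left_le) auto
  then show ?thesis by (simp add: power_divide mult.commute)
qed

(* Each coordinate split spends alpha / 2 on each of the two bad events. *)
fun box_threshold :: "nat \<Rightarrow> real \<Rightarrow> real \<Rightarrow> real" where
  "box_threshold 0 \<alpha> lam = lam"
| "box_threshold (Suc k) \<alpha> lam = weight_threshold (\<alpha> / 2) (box_threshold k (\<alpha> / 2) lam)"

lemma box_threshold_pos: "\<alpha> > 0 \<Longrightarrow> lam > 0 \<Longrightarrow> box_threshold k \<alpha> lam > 0"
  by (induction k arbitrary: \<alpha>) (simp_all add: weight_threshold_pos)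

lemma prob_box_sum_gt:
  fixes V :: "nat \<Rightarrow> 'a set" and f :: "(nat \<Rightarrow> 'a) \<Rightarrow> real"
  assumes "\<alpha> > 0" "lam > 0" "0 < d" "\<forall>i<k. finite (V i) \<and> d \<le> card (V i)"
    and "\<forall>e\<in>PiE {..<k} V. 0 \<le> f e \<and> f e \<le> 1"
    and "(\<Sum>e\<in>PiE {..<k} V. f e) \<le> box_threshold k \<alpha> lam * (\<Prod>i<k. real (card (V i)))"
  shows "measure_pmf.prob (Pi_pmf {..<k} dflt (\<lambda>i. uniform_subset (V i) d))
           {W. (\<Sum>e\<in>PiE {..<k} W. f e) > lam * real d ^ k} \<le> \<alpha> ^ d"
  using assms(1,4-6)
proof (induction k arbitrary: \<alpha> f)
  case 0
  then show ?case by simp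
next
  case (Suc k)
  define P where "P i = uniform_subset (V i) d" for i
  define \<tau> N where "\<tau> = box_threshold k (\<alpha> / 2) lam" and "N = real (card (PiE {..<k} V))"
  define B where "B = {y. (\<Sum>v\<in>y. slice_density k V f v) > \<tau> * real d}"
  have "finite (V k)" "d \<le> card (V k)" using Suc.prems(2) by auto
  have N: "N = (\<Prod>i<k. real (card (V i)))" using Suc.prems(2) by (simp add: N_def card_PiE)
  have "0 < \<tau>" using Suc.prems(1) assms(2) by (simp add: \<tau>_def box_threshold_pos)
  have B_small: "measure_pmf.prob (P k) B \<le> (\<alpha> / 2) ^ d"
    unfolding P_def B_def using Suc.prems \<open>0 < \<tau>\<close>
    by (intro prob_uniform_subset_slice_density_gt) (auto simp: \<tau>_def card_PiE)
  have fiber: "measure_pmf.prob (Pi_pmf {..<k} dflt P)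
      {g. g(k := y) \<in> {W. (\<Sum>e\<in>PiE {..<Suc k} W. f e) > lam * real d ^ Suc k}} \<le> (\<alpha> / 2) ^ d"
    if "y \<in> set_pmf (P k)" "y \<notin> B" for y
  proof -
    have y: "y \<subseteq> V k" "card y = d"
      using that(1) \<open>finite (V k)\<close> \<open>d \<le> card (V k)\<close> by (auto simp: P_def set_pmf_uniform_subset)
    have "(\<Sum>e\<in>PiE {..<k} V. fiber_mean k y f e) = N * (\<Sum>v\<in>y. slice_density k V f v) / real d"
      by (simp add: sum_fiber_mean N_def y(2))
    also have "\<dots> \<le> N * (\<tau> * real d) / real d"
      using that(2) by (intro divide_right_mono mult_left_mono) (auto simp: B_def N_def)
    also have "\<dots> = box_threshold k (\<alpha> / 2) lam * (\<Prod>i<k. real (card (V i)))"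
      using assms(3) by (simp add: \<tau>_def N)
    finally have "measure_pmf.prob (Pi_pmf {..<k} dflt P)
        {W. (\<Sum>e\<in>PiE {..<k} W. fiber_mean k y f e) > lam * real d ^ k} \<le> (\<alpha> / 2) ^ d"
      unfolding P_def using Suc.prems(1,2) fiber_mean_bounds[OF Suc.prems(3) _ y(1)]
      by (intro Suc.IH) auto
    moreover have "{g. g(k := y) \<in> {W. (\<Sum>e\<in>PiE {..<Suc k} W. f e) > lam * real d ^ Suc k}}
        = {W. (\<Sum>e\<in>PiE {..<k} W. fiber_mean k y f e) > lam * real d ^ k}"
      using y(2) assms(3) by (simp add: sum_PiE_lessThan_Suc_fun_upd)
    ultimately show ?thesis by simp
  qed
  have "measure_pmf.prob (Pi_pmf {..<Suc k} dflt P) {W. (\<Sum>e\<in>PiE {..<Suc k} W. f e) > lam * real d ^ Suc k}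
      \<le> measure_pmf.prob (P k) B + (\<alpha> / 2) ^ d"
    using fiber Suc.prems(1) by (intro prob_Pi_pmf_lessThan_Suc_le) auto
  also have "\<dots> \<le> 2 * (\<alpha> / 2) ^ d" using B_small by simp
  also have "\<dots> \<le> \<alpha> ^ d" using Suc.prems(1) assms(3) by (intro two_mult_half_power_le) auto
  finally show ?case unfolding P_def .
qed

lemma set_pmf_Pi_uniform_subset_imp_subset:
  fixes k :: nat
  assumes "W \<in> set_pmf (Pi_pmf {..<k} dflt (\<lambda>i. uniform_subset (V i) d))" "i < k"
    and "finite (V i)" "d \<le> card (V i)"
  shows "W i \<subseteq> V i"
proof -
  have "W i \<in> set_pmf (uniform_subset (V i) d)"
    using assms(1,2) by (auto simp: set_Pi_pmf[OF finite_lessThan] PiE_dflt_def)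
  then show ?thesis using assms(3,4) by (simp add: set_pmf_uniform_subset)
qed

theorem lemma3p6:
  fixes k :: nat and \<alpha> lam :: real
  assumes "k \<ge> 1" and "\<alpha> > 0" and "lam > 0"
  shows "\<exists>\<tau>>0. \<forall>(V :: nat \<Rightarrow> nat set) (d :: nat) (H :: (nat \<Rightarrow> nat) set).
           (\<forall>i<k. finite (V i)) \<and> 2 \<le> d \<and> (\<forall>i<k. d \<le> card (V i)) \<and>
           H \<subseteq> PiE {..<k} V \<and>
           real (card H) \<le> \<tau> * (\<Prod>i<k. real (card (V i)))
           \<longrightarrow> measure_pmf.prob
                 (Pi_pmf {..<k} {} (\<lambda>i. pmf_of_set {S. S \<subseteq> V i \<and> card S = d}))
                 {W. real (card (H \<inter> PiE {..<k} W)) > lam * real d ^ k}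
               \<le> \<alpha> ^ d"
proof (intro exI[of _ "box_threshold k \<alpha> lam"] conjI allI impI)
  show "box_threshold k \<alpha> lam > 0" using assms(2,3) by (rule box_threshold_pos)
  fix V :: "nat \<Rightarrow> nat set" and d :: nat and H :: "(nat \<Rightarrow> nat) set"
  assume hyps: "(\<forall>i<k. finite (V i)) \<and> 2 \<le> d \<and> (\<forall>i<k. d \<le> card (V i)) \<and> H \<subseteq> PiE {..<k} V \<and>
    real (card H) \<le> box_threshold k \<alpha> lam * (\<Prod>i<k. real (card (V i)))"
  have "finite (PiE {..<k} V)" using hyps by (intro finite_PiE) auto
  define P where "P = Pi_pmf {..<k} {} (\<lambda>i. uniform_subset (V i) d)"
  have "finite (PiE {..<k} W)" if "W \<in> set_pmf P" for W
    using that hyps set_pmf_Pi_uniform_subset_imp_subset[of W k "{}" V d]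
    by (intro finite_PiE) (auto simp: P_def intro: finite_subset)
  then have "measure_pmf.prob P {W. real (card (H \<inter> PiE {..<k} W)) > lam * real d ^ k}
      \<le> measure_pmf.prob P {W. (\<Sum>e\<in>PiE {..<k} W. of_bool (e \<in> H)) > lam * real d ^ k}"
    by (intro measure_pmf.finite_measure_mono_AE) (auto simp: AE_measure_pmf_iff Int_commute)
  also have "\<dots> \<le> \<alpha> ^ d"
    unfolding P_def using assms(2,3) hyps \<open>finite (PiE {..<k} V)\<close>
    by (intro prob_box_sum_gt) (auto simp: Int_absorb2 Int_commute)
  finally show "measure_pmf.prob (Pi_pmf {..<k} {} (\<lambda>i. pmf_of_set {S. S \<subseteq> V i \<and> card S = d}))
      {W. real (card (H \<inter> PiE {..<k} W)) > lam * real d ^ k} \<le> \<alpha> ^ d"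
    by (simp add: P_def uniform_subset_def)
qed

end
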